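(* Let $d\ge2$ and let $v=(v_1,\dots,v_d)\in\mathbb{R}^d$ satisfy $\sum_j v_j=1$ and $\sum_j v_j^2=d$. Then $\|v\|_1=\sum_j|v_j|\le d$ if $d$ is odd and $\|v\|_1\le\sqrt{d^2-1}$ if $d$ is even. When $d$ is odd, equality holds if and only if $v$ has $(d+1)/2$ components equal to $1$ and $(d-1)/2$ components equal to $-1$. When $d$ is even, equality holds if and only if $v$ has $d/2$ components equal to $(1+\sqrt{d^2-1})/d$ and $d/2$ components equal to $(1-\sqrt{d^2-1})/d$. *)

theory Defs
  imports "HOL-Analysis.Analysis"
begin

end

theory Submission
  imports Defs
begin

(*
  Split the indices by the sign of v j into classes of sizes p and n, and put k = p - n and
  L = sum_j |v j|. Since sum_j v j = 1, the two classes have sums (L + 1)/2 and (1 - L)/2, so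
  Cauchy-Schwarz on each class together with sum_j (v j)^2 = d gives the quadratic constraint
  d L^2 - 2 k L <= d (d^2 - 1 - k^2), with equality iff v is constant on each class.
  The left side increases for L >= k/d, so L <= c for every c >= 1 at which it is at least the
  right side. For c = d the excess is d (k - 1)^2. For c = sqrt (d^2 - 1) it is k (d k - 2 c);
  when d is even so is k, and this is positive unless k = 0. Equality therefore forces k = 1
  resp. k = 0, which fixes the class sizes and the class means.
*)

definition sum_sq_dev :: "('a \<Rightarrow> real) \<Rightarrow> 'a set \<Rightarrow> real" where
  "sum_sq_dev f S = (\<Sum>x\<in>S. (f x - (\<Sum>y\<in>S. f y) / real (card S))^2)"

lemma card_mult_sum_squares_eq:
  fixes f :: "'a \<Rightarrow> real"
  assumes "finite S"
  shows "real (card S) * (\<Sum>x\<in>S. (f x)^2) - (\<Sum>x\<in>S. f x)^2 = real (card S) * sum_sq_dev f S"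
proof (cases "S = {}")
  case False
  define c where "c = real (card S)"
  define F where "F = (\<Sum>x\<in>S. f x)"
  define m where "m = F / c"
  have cm: "c * m = F" using False assms by (simp add: c_def m_def card_gt_0_iff)
  have "sum_sq_dev f S = (\<Sum>x\<in>S. (f x)^2 - 2 * m * f x + m^2)"
    unfolding sum_sq_dev_def c_def[symmetric] F_def[symmetric] m_def[symmetric]
    by (intro sum.cong) (simp_all add: power2_diff)
  also have "\<dots> = (\<Sum>x\<in>S. (f x)^2) - 2 * m * F + c * m^2"
    by (simp add: sum.distrib sum_subtractf sum_distrib_left c_def F_def)
  finally have "c * sum_sq_dev f S = c * ((\<Sum>x\<in>S. (f x)^2) - 2 * m * F + c * m^2)"
    by simp
  also have "\<dots> = c * (\<Sum>x\<in>S. (f x)^2) - 2 * (c * m) * F + (c * m)^2"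
    by (simp add: algebra_simps power2_eq_square)
  finally show ?thesis unfolding cm by (simp add: c_def F_def power2_eq_square)
qed (simp add: sum_sq_dev_def)

lemma sum_sq_dev_nonneg: "sum_sq_dev f S \<ge> 0"
  unfolding sum_sq_dev_def by (intro sum_nonneg) simp

lemma sum_sq_dev_eq_0_imp_eq_mean:
  assumes "finite S" "sum_sq_dev f S = 0" "x \<in> S"
  shows "f x = (\<Sum>y\<in>S. f y) / real (card S)"
proof -
  define m where "m = (\<Sum>y\<in>S. f y) / real (card S)"
  have "(f x - m)^2 = 0"
    by (rule sum_nonneg_0[OF assms(1), where f = "\<lambda>x. (f x - m)^2"])
      (use assms(2,3) in \<open>simp_all add: sum_sq_dev_def m_def\<close>)
  then show ?thesis unfolding m_def by simp
qed

lemma sum_two_valued: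
  fixes v :: "nat \<Rightarrow> real"
  assumes "card {j. j < d \<and> v j = a} + card {j. j < d \<and> v j = b} = d" "a \<noteq> b"
  shows "(\<Sum>j<d. f (v j)) = real (card {j. j < d \<and> v j = a}) * f a + real (card {j. j < d \<and> v j = b}) * f b"
proof -
  let ?A = "{j. j < d \<and> v j = a}" and ?B = "{j. j < d \<and> v j = b}"
  have disj: "?A \<inter> ?B = {}" using assms(2) by auto
  have "card (?A \<union> ?B) = card {..<d}" using card_Un_disjoint[OF _ _ disj] assms(1) by simp
  then have "?A \<union> ?B = {..<d}" by (intro card_subset_eq) auto
  then have "(\<Sum>j<d. f (v j)) = (\<Sum>j\<in>?A. f (v j)) + (\<Sum>j\<in>?B. f (v j))"
    using sum.union_disjoint[OF _ _ disj, of "\<lambda>j. f (v j)"] by simp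
  also have "\<dots> = (\<Sum>j\<in>?A. f a) + (\<Sum>j\<in>?B. f b)" by (intro arg_cong2[where f = "(+)"] sum.cong) auto
  finally show ?thesis by simp
qed

lemma quadratic_le_imp_le:
  fixes a b x y :: real
  assumes "a * x^2 - 2 * b * x \<le> a * y^2 - 2 * b * y" "b \<le> a * y" "a > 0"
  shows "x \<le> y"
proof (rule ccontr)
  assume "\<not> x \<le> y"
  then have "a * x > a * y" using assms(3) by simp
  then have "(x - y) * (a * (x + y) - 2 * b) > 0"
    using \<open>\<not> x \<le> y\<close> assms(2) by (intro mult_pos_pos) (auto simp: algebra_simps)
  moreover have "(x - y) * (a * (x + y) - 2 * b) = (a * x^2 - 2 * b * x) - (a * y^2 - 2 * b * y)"
    by (simp add: algebra_simps power2_eq_square)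
  ultimately show False using assms(1) by linarith
qed

locale normalized_vector =
  fixes d :: nat and v :: "nat \<Rightarrow> real"
  assumes sum_eq_1: "(\<Sum>j<d. v j) = 1"
    and sum_squares_eq: "(\<Sum>j<d. (v j)^2) = real d"
begin

definition nonneg_idx :: "nat set" where "nonneg_idx = {j. j < d \<and> 0 \<le> v j}"
definition neg_idx :: "nat set" where "neg_idx = {j. j < d \<and> v j < 0}"
definition l1_norm :: real where "l1_norm = (\<Sum>j<d. \<bar>v j\<bar>)"
definition sign_excess :: real where "sign_excess = real (card nonneg_idx) - real (card neg_idx)"

lemma finite_nonneg_idx: "finite nonneg_idx"
  and finite_neg_idx: "finite neg_idx"
  by (simp_all add: nonneg_idx_def neg_idx_def)

lemma sum_split_sign: "(\<Sum>j<d. f j) = (\<Sum>j\<in>nonneg_idx. f j) + (\<Sum>j\<in>neg_idx. f j)"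
proof -
  have "{..<d} = nonneg_idx \<union> neg_idx" "nonneg_idx \<inter> neg_idx = {}"
    by (auto simp: nonneg_idx_def neg_idx_def)
  then show ?thesis using sum.union_disjoint[OF finite_nonneg_idx finite_neg_idx] by simp
qed

lemma card_sign_classes: "card nonneg_idx + card neg_idx = d"
  using sum_split_sign[of "\<lambda>_. 1 :: nat"] by simp

lemma sum_nonneg_idx: "(\<Sum>j\<in>nonneg_idx. v j) = (l1_norm + 1) / 2"
  and sum_neg_idx: "(\<Sum>j\<in>neg_idx. v j) = (1 - l1_norm) / 2"
proof -
  have "(\<Sum>j\<in>nonneg_idx. \<bar>v j\<bar>) = (\<Sum>j\<in>nonneg_idx. v j)"
    by (intro sum.cong) (auto simp: nonneg_idx_def)
  moreover have "(\<Sum>j\<in>neg_idx. \<bar>v j\<bar>) = - (\<Sum>j\<in>neg_idx. v j)"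
    by (subst sum_negf[symmetric], intro sum.cong) (auto simp: neg_idx_def)
  ultimately have "l1_norm = (\<Sum>j\<in>nonneg_idx. v j) - (\<Sum>j\<in>neg_idx. v j)"
    unfolding l1_norm_def sum_split_sign[of "\<lambda>j. \<bar>v j\<bar>"] by simp
  moreover have "(\<Sum>j\<in>nonneg_idx. v j) + (\<Sum>j\<in>neg_idx. v j) = 1"
    using sum_eq_1 sum_split_sign[of v] by simp
  ultimately show "(\<Sum>j\<in>nonneg_idx. v j) = (l1_norm + 1) / 2"
    and "(\<Sum>j\<in>neg_idx. v j) = (1 - l1_norm) / 2" by simp_all
qed

lemma l1_norm_quadratic_eq:
  "d * l1_norm^2 - 2 * sign_excess * l1_norm - d * ((real d)^2 - 1 - sign_excess^2)
    = - 4 * real (card nonneg_idx) * real (card neg_idx) * (sum_sq_dev v nonneg_idx + sum_sq_dev v neg_idx)"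
proof -
  define p where "p = real (card nonneg_idx)"
  define n where "n = real (card neg_idx)"
  define L where "L = l1_norm"
  define Q\<^sub>p where "Q\<^sub>p = (\<Sum>j\<in>nonneg_idx. (v j)^2)"
  define Q\<^sub>n where "Q\<^sub>n = (\<Sum>j\<in>neg_idx. (v j)^2)"
  have d: "real d = p + n" using card_sign_classes unfolding p_def n_def by linarith
  have Q: "Q\<^sub>p + Q\<^sub>n = p + n"
    using sum_squares_eq sum_split_sign[of "\<lambda>j. (v j)^2"] d unfolding Q\<^sub>p_def Q\<^sub>n_def by simp
  have dev\<^sub>p: "p * sum_sq_dev v nonneg_idx = p * Q\<^sub>p - ((L + 1) / 2)^2"
    using card_mult_sum_squares_eq[OF finite_nonneg_idx, of v]
    unfolding p_def Q\<^sub>p_def L_def sum_nonneg_idx by simp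
  have dev\<^sub>n: "n * sum_sq_dev v neg_idx = n * Q\<^sub>n - ((1 - L) / 2)^2"
    using card_mult_sum_squares_eq[OF finite_neg_idx, of v]
    unfolding n_def Q\<^sub>n_def L_def sum_neg_idx by simp
  have "- 4 * p * n * (sum_sq_dev v nonneg_idx + sum_sq_dev v neg_idx)
      = - 4 * (n * (p * sum_sq_dev v nonneg_idx) + p * (n * sum_sq_dev v neg_idx))"
    by (simp add: algebra_simps)
  also have "\<dots> = - 4 * (n * (p * Q\<^sub>p - ((L + 1) / 2)^2) + p * (n * Q\<^sub>n - ((1 - L) / 2)^2))"
    unfolding dev\<^sub>p dev\<^sub>n ..
  also have "\<dots> = - 4 * p * n * (Q\<^sub>p + Q\<^sub>n) + n * (L + 1)^2 + p * (1 - L)^2"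
    by (simp add: field_simps power2_eq_square)
  also have "\<dots> = d * L^2 - 2 * sign_excess * L - d * ((real d)^2 - 1 - sign_excess^2)"
    unfolding Q d sign_excess_def p_def[symmetric] n_def[symmetric]
    by (simp add: algebra_simps power2_eq_square)
  finally show ?thesis unfolding L_def p_def n_def by simp
qed

lemma l1_norm_quadratic_le:
  "d * l1_norm^2 - 2 * sign_excess * l1_norm \<le> d * ((real d)^2 - 1 - sign_excess^2)"
proof -
  have "0 \<le> 4 * real (card nonneg_idx) * real (card neg_idx) * (sum_sq_dev v nonneg_idx + sum_sq_dev v neg_idx)"
    by (intro mult_nonneg_nonneg add_nonneg_nonneg sum_sq_dev_nonneg) simp_all
  then show ?thesis using l1_norm_quadratic_eq by linarith
qed

lemma const_on_sign_classes_if_extremal: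
  assumes "d * l1_norm^2 - 2 * sign_excess * l1_norm = d * ((real d)^2 - 1 - sign_excess^2)"
    and "nonneg_idx \<noteq> {}" "neg_idx \<noteq> {}"
  shows "\<forall>j\<in>nonneg_idx. v j = (l1_norm + 1) / (2 * real (card nonneg_idx))"
    and "\<forall>j\<in>neg_idx. v j = (1 - l1_norm) / (2 * real (card neg_idx))"
proof -
  have "card nonneg_idx > 0" "card neg_idx > 0"
    using assms(2,3) finite_nonneg_idx finite_neg_idx by (simp_all add: card_gt_0_iff)
  then have "sum_sq_dev v nonneg_idx + sum_sq_dev v neg_idx = 0"
    using l1_norm_quadratic_eq assms(1) by simp
  then have "sum_sq_dev v nonneg_idx = 0" "sum_sq_dev v neg_idx = 0"
    using sum_sq_dev_nonneg[of v nonneg_idx] sum_sq_dev_nonneg[of v neg_idx] by linarith+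
  then show "\<forall>j\<in>nonneg_idx. v j = (l1_norm + 1) / (2 * real (card nonneg_idx))"
    and "\<forall>j\<in>neg_idx. v j = (1 - l1_norm) / (2 * real (card neg_idx))"
    using sum_sq_dev_eq_0_imp_eq_mean[OF finite_nonneg_idx, of v]
      sum_sq_dev_eq_0_imp_eq_mean[OF finite_neg_idx, of v]
    unfolding sum_nonneg_idx sum_neg_idx by simp_all
qed

lemma card_level_sets_if_extremal:
  assumes "d * l1_norm^2 - 2 * sign_excess * l1_norm = d * ((real d)^2 - 1 - sign_excess^2)"
    and "card nonneg_idx > 0" "card neg_idx > 0"
    and "(l1_norm + 1) / (2 * real (card nonneg_idx)) = a"
    and "(1 - l1_norm) / (2 * real (card neg_idx)) = b"
    and "a \<noteq> b"
  shows "card {j. j < d \<and> v j = a} = card nonneg_idx" and "card {j. j < d \<and> v j = b} = card neg_idx"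
proof -
  have "nonneg_idx \<noteq> {}" "neg_idx \<noteq> {}" using assms(2,3) by auto
  then have "\<forall>j\<in>nonneg_idx. v j = a" "\<forall>j\<in>neg_idx. v j = b"
    using const_on_sign_classes_if_extremal[OF assms(1)] assms(4,5) by simp_all
  moreover have "j < d \<longleftrightarrow> j \<in> nonneg_idx \<or> j \<in> neg_idx" for j
    by (auto simp: nonneg_idx_def neg_idx_def)
  ultimately have "{j. j < d \<and> v j = a} = nonneg_idx" "{j. j < d \<and> v j = b} = neg_idx"
    using assms(6) by auto
  then show "card {j. j < d \<and> v j = a} = card nonneg_idx" and "card {j. j < d \<and> v j = b} = card neg_idx"
    by simp_all
qed

lemma sign_excess_le: "sign_excess \<le> real d"
  using card_sign_classes unfolding sign_excess_def by linarith

lemma sign_excess_even_gap: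
  assumes "even d" "0 \<le> s" "s < real d"
  shows "sign_excess = 0 \<or> 0 < sign_excess * (d * sign_excess - 2 * s)"
proof -
  let ?k = sign_excess
  have "card nonneg_idx = card neg_idx \<or> card neg_idx + 2 \<le> card nonneg_idx
      \<or> card nonneg_idx + 2 \<le> card neg_idx"
    using card_sign_classes assms(1) by presburger
  then have "?k = 0 \<or> 2 \<le> ?k \<or> ?k \<le> -2" unfolding sign_excess_def by auto
  then show ?thesis
  proof (elim disjE)
    assume "2 \<le> ?k"
    then have "2 * real d \<le> d * ?k" using mult_left_mono[of 2 ?k "real d"] by simp
    then show ?thesis using \<open>2 \<le> ?k\<close> assms(3) by (intro disjI2 mult_pos_pos) auto
  next
    assume "?k \<le> -2"
    then have "d * ?k \<le> - 2 * real d" using mult_left_mono[of ?k "-2" "real d"] by simp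
    then show ?thesis using \<open>?k \<le> -2\<close> assms(2,3) by (intro disjI2 mult_neg_neg) auto
  qed simp
qed

lemma l1_norm_odd:
  assumes "odd d" "2 \<le> d"
  shows "l1_norm \<le> real d"
    and "l1_norm = real d \<longleftrightarrow>
           card {j. j < d \<and> v j = 1} = (d + 1) div 2 \<and> card {j. j < d \<and> v j = -1} = (d - 1) div 2"
proof -
  let ?k = sign_excess
  have d_pos: "real d > 0" using assms(2) by simp
  have at_d: "d * (real d)^2 - 2 * ?k * d = d * ((real d)^2 - 1 - ?k^2) + d * (?k - 1)^2"
    by (simp add: algebra_simps power2_eq_square)
  have "real d \<le> real d * real d" using assms(2) by (simp add: mult_le_cancel_left1)
  then have "?k \<le> real d * real d" using sign_excess_le by linarith
  moreover have "0 \<le> real d * (?k - 1)^2" by simp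
  then have "d * l1_norm^2 - 2 * ?k * l1_norm \<le> d * (real d)^2 - 2 * ?k * d"
    using l1_norm_quadratic_le at_d by linarith
  ultimately show "l1_norm \<le> real d" using quadratic_le_imp_le d_pos by blast
  show "l1_norm = real d \<longleftrightarrow>
      card {j. j < d \<and> v j = 1} = (d + 1) div 2 \<and> card {j. j < d \<and> v j = -1} = (d - 1) div 2"
  proof
    assume L: "l1_norm = real d"
    have "real d * (?k - 1)^2 \<le> 0" using l1_norm_quadratic_le at_d unfolding L by linarith
    then have "(?k - 1)^2 \<le> 0" using d_pos by (simp add: mult_le_0_iff)
    then have "?k = 1" by simp
    then have extremal: "d * l1_norm^2 - 2 * ?k * l1_norm = d * ((real d)^2 - 1 - ?k^2)"
      using at_d unfolding L by simp
    from \<open>?k = 1\<close> have "real (card nonneg_idx) = real (card neg_idx + 1)"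
      unfolding sign_excess_def by simp
    then have "card nonneg_idx = card neg_idx + 1" by (simp only: of_nat_eq_iff)
    then have p: "2 * card nonneg_idx = d + 1" and n: "2 * card neg_idx = d - 1"
      using card_sign_classes by linarith+
    have "card nonneg_idx > 0" "card neg_idx > 0" using p n assms by presburger+
    moreover have "2 * real (card nonneg_idx) = real d + 1" using arg_cong[OF p, of real] by simp
    moreover have "2 * real (card neg_idx) = real d - 1"
      using arg_cong[OF n, of real] assms(2) by (simp add: of_nat_diff)
    moreover have "(1 - real d) / (real d - 1) = -1" using assms(2) by (simp add: field_simps)
    ultimately have "card {j. j < d \<and> v j = 1} = card nonneg_idx" "card {j. j < d \<and> v j = -1} = card neg_idx"
      using card_level_sets_if_extremal[OF extremal, of 1 "-1"] d_pos unfolding L by simp_all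
    moreover have "card nonneg_idx = (d + 1) div 2" "card neg_idx = (d - 1) div 2"
      using p n by presburger+
    ultimately show "card {j. j < d \<and> v j = 1} = (d + 1) div 2 \<and> card {j. j < d \<and> v j = -1} = (d - 1) div 2"
      by simp
  next
    assume "card {j. j < d \<and> v j = 1} = (d + 1) div 2 \<and> card {j. j < d \<and> v j = -1} = (d - 1) div 2"
    then have counts: "card {j. j < d \<and> v j = 1} + card {j. j < d \<and> v j = -1} = d"
      using assms(1) by presburger
    have "l1_norm = real (card {j. j < d \<and> v j = 1}) * \<bar>1\<bar> + real (card {j. j < d \<and> v j = -1}) * \<bar>-1\<bar>"
      unfolding l1_norm_def by (rule sum_two_valued[OF counts]) simp
    also have "\<dots> = real d" using arg_cong[OF counts, of real] by simp
    finally show "l1_norm = real d" .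
  qed
qed

lemma l1_norm_even:
  assumes "even d" "2 \<le> d"
  defines "s \<equiv> sqrt ((real d)^2 - 1)"
  shows "l1_norm \<le> s"
    and "l1_norm = s \<longleftrightarrow>
           card {j. j < d \<and> v j = (1 + s) / real d} = d div 2 \<and>
           card {j. j < d \<and> v j = (1 - s) / real d} = d div 2"
proof -
  let ?k = sign_excess
  have d_pos: "real d > 0" using assms(2) by simp
  have "(real d)^2 \<ge> 2^2" using assms(2) by (intro power_mono) auto
  then have s2: "s^2 = (real d)^2 - 1" and "s \<ge> 0" unfolding s_def by simp_all
  have "1^2 < s^2" using s2 \<open>(real d)^2 \<ge> 2^2\<close> by simp
  then have "1 < s" using \<open>s \<ge> 0\<close> by (rule power_less_imp_less_base)
  have "s < real d" using s2 d_pos by (intro power_less_imp_less_base[of s 2]) auto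
  have at_s: "d * s^2 - 2 * ?k * s = d * ((real d)^2 - 1 - ?k^2) + ?k * (d * ?k - 2 * s)"
    unfolding s2 by (simp add: algebra_simps power2_eq_square)
  have gap: "?k = 0 \<or> 0 < ?k * (d * ?k - 2 * s)"
    using sign_excess_even_gap[OF assms(1) \<open>s \<ge> 0\<close> \<open>s < real d\<close>] .
  have "real d \<le> real d * s" using \<open>1 < s\<close> by (simp add: mult_le_cancel_left1)
  then have "?k \<le> real d * s" using sign_excess_le by linarith
  moreover have "0 \<le> ?k * (d * ?k - 2 * s)" using gap by auto
  then have "d * l1_norm^2 - 2 * ?k * l1_norm \<le> d * s^2 - 2 * ?k * s"
    using l1_norm_quadratic_le at_s by linarith
  ultimately show "l1_norm \<le> s" using quadratic_le_imp_le d_pos by blast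
  have a_ne_b: "(1 + s) / real d \<noteq> (1 - s) / real d" using \<open>1 < s\<close> d_pos by (simp add: divide_simps)
  show "l1_norm = s \<longleftrightarrow>
      card {j. j < d \<and> v j = (1 + s) / real d} = d div 2 \<and>
      card {j. j < d \<and> v j = (1 - s) / real d} = d div 2"
  proof
    assume L: "l1_norm = s"
    have "?k * (d * ?k - 2 * s) \<le> 0" using l1_norm_quadratic_le at_s unfolding L by linarith
    then have "?k = 0" using gap by linarith
    then have extremal: "d * l1_norm^2 - 2 * ?k * l1_norm = d * ((real d)^2 - 1 - ?k^2)"
      using at_s unfolding L by simp
    from \<open>?k = 0\<close> have "card nonneg_idx = card neg_idx" unfolding sign_excess_def by simp
    then have p: "2 * card nonneg_idx = d" and n: "2 * card neg_idx = d"
      using card_sign_classes by linarith+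
    have "card nonneg_idx > 0" "card neg_idx > 0" using p n assms(2) by linarith+
    moreover have "2 * real (card nonneg_idx) = real d" "2 * real (card neg_idx) = real d"
      using arg_cong[OF p, of real] arg_cong[OF n, of real] by simp_all
    ultimately have "card {j. j < d \<and> v j = (1 + s) / real d} = card nonneg_idx"
      and "card {j. j < d \<and> v j = (1 - s) / real d} = card neg_idx"
      using card_level_sets_if_extremal[OF extremal _ _ _ _ a_ne_b] unfolding L by (simp_all add: add.commute)
    moreover have "card nonneg_idx = d div 2" "card neg_idx = d div 2" using p n by presburger+
    ultimately show "card {j. j < d \<and> v j = (1 + s) / real d} = d div 2 \<and>
        card {j. j < d \<and> v j = (1 - s) / real d} = d div 2"
      by simp
  next
    assume counts: "card {j. j < d \<and> v j = (1 + s) / real d} = d div 2 \<and>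
        card {j. j < d \<and> v j = (1 - s) / real d} = d div 2"
    then have "card {j. j < d \<and> v j = (1 + s) / real d} + card {j. j < d \<and> v j = (1 - s) / real d} = d"
      using assms(1) by presburger
    then have "l1_norm = real (d div 2) * \<bar>(1 + s) / real d\<bar> + real (d div 2) * \<bar>(1 - s) / real d\<bar>"
      unfolding l1_norm_def using counts by (subst sum_two_valued[OF _ a_ne_b]) simp_all
    also have "\<dots> = real (d div 2) * ((1 + s) / real d) + real (d div 2) * ((s - 1) / real d)"
      using \<open>1 < s\<close> d_pos by simp
    also have "\<dots> = s" using assms(1) d_pos by (auto simp: field_simps elim!: evenE)
    finally show "l1_norm = s" .
  qed
qed

end

theorem lemmaS2:
  fixes d :: nat and v :: "nat \<Rightarrow> real"
  assumes "d \<ge> 2"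
    and "(\<Sum>j<d. v j) = 1"
    and "(\<Sum>j<d. (v j)^2) = real d"
  shows "(odd d \<longrightarrow>
            (\<Sum>j<d. \<bar>v j\<bar>) \<le> real d \<and>
            ((\<Sum>j<d. \<bar>v j\<bar>) = real d \<longleftrightarrow>
               card {j. j < d \<and> v j = 1} = (d + 1) div 2 \<and>
               card {j. j < d \<and> v j = -1} = (d - 1) div 2))
       \<and> (even d \<longrightarrow>
            (\<Sum>j<d. \<bar>v j\<bar>) \<le> sqrt ((real d)^2 - 1) \<and>
            ((\<Sum>j<d. \<bar>v j\<bar>) = sqrt ((real d)^2 - 1) \<longleftrightarrow>
               card {j. j < d \<and> v j = (1 + sqrt ((real d)^2 - 1)) / real d} = d div 2 \<and>
               card {j. j < d \<and> v j = (1 - sqrt ((real d)^2 - 1)) / real d} = d div 2))"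
proof -
  interpret normalized_vector d v using assms(2,3) by unfold_locales
  show ?thesis using l1_norm_odd l1_norm_even assms(1) unfolding l1_norm_def by blast
qed

end
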